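(* Let $\mathcal L$ be a finite propositional signature, $\Gamma$ a finite nonempty theory over $\mathcal L$, $\mathcal L'\supseteq\mathcal L$ a signature, and $M$ an HT-interpretation over $\mathcal L'$. Then $M\in E_s(\Gamma)$ (equivalence interpretations over $\mathcal L'$) if and only if $M|_{\mathcal L}$ is totality preserving and $M|_{\mathcal L}\models\bigvee_{\phi\in\Gamma}\bigwedge_{\psi\in\Gamma_\phi}\psi$, where $\Gamma_\phi=\{\neg\neg\psi\mid\psi\in\Gamma\}\cup\{\phi\to(\neg\neg a\to a)\mid a\in\mathcal L\}$.
   Context: A propositional signature is a set of atoms; formulas are built from atoms and $\bot$ with $\wedge,\vee,\to$; $\neg\phi$ abbreviates $\phi\to\bot$. An HT-interpretation over $\mathcal L'$ is a pair $(X,Y)$ with $X\subseteq Y\subseteq\mathcal L'$; total if $X=Y$. HT-satisfaction: $(X,Y)\models a$ iff $a\in X$; $(X,Y)\not\models\bot$; $\wedge,\vee$ componentwise; $(X,Y)\models\phi\to\psi$ iff (i) $(X,Y)\not\models\phi$ or $(X,Y)\models\psi$, and (ii) $Y\models\phi\to\psi$ classically. A theory is satisfied iff each member is. A here-countermodel of $\Gamma$ is an $(X,Y)$ with $(X,Y)\not\models\Gamma$ and $Y\models\Gamma$; $E_s(\Gamma)$ is the set of HT-interpretations that are total HT-models of $\Gamma$ or here-countermodels of $\Gamma$. For $M=(X,Y)$ over $\mathcal L'$, $M|_{\mathcal L}=(X\cap\mathcal L,Y\cap\mathcal L)$; the restriction is totality preserving if $X\subsetneq Y$ implies $X\cap\mathcal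 L\subsetneq Y\cap\mathcal L$. *)

theory Defs
  imports Main
begin

datatype 'a form = Atom 'a | Bot | And "'a form" "'a form" | Or "'a form" "'a form"
  | Imp "'a form" "'a form"

definition Neg :: "'a form \<Rightarrow> 'a form" where "Neg \<phi> = Imp \<phi> Bot"

definition Top :: "'a form" where "Top = Imp Bot Bot"

fun atoms :: "'a form \<Rightarrow> 'a set" where
  "atoms (Atom a) = {a}"
| "atoms Bot = {}"
| "atoms (And \<phi> \<psi>) = atoms \<phi> \<union> atoms \<psi>"
| "atoms (Or \<phi> \<psi>) = atoms \<phi> \<union> atoms \<psi>"
| "atoms (Imp \<phi> \<psi>) = atoms \<phi> \<union> atoms \<psi>"

fun csat :: "'a set \<Rightarrow> 'a form \<Rightarrow> bool" where
  "csat Y (Atom a) = (a \<in> Y)"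
| "csat Y Bot = False"
| "csat Y (And \<phi> \<psi>) = (csat Y \<phi> \<and> csat Y \<psi>)"
| "csat Y (Or \<phi> \<psi>) = (csat Y \<phi> \<or> csat Y \<psi>)"
| "csat Y (Imp \<phi> \<psi>) = (csat Y \<phi> \<longrightarrow> csat Y \<psi>)"

fun htsat :: "'a set \<times> 'a set \<Rightarrow> 'a form \<Rightarrow> bool" where
  "htsat (X, Y) (Atom a) = (a \<in> X)"
| "htsat (X, Y) Bot = False"
| "htsat (X, Y) (And \<phi> \<psi>) = (htsat (X, Y) \<phi> \<and> htsat (X, Y) \<psi>)"
| "htsat (X, Y) (Or \<phi> \<psi>) = (htsat (X, Y) \<phi> \<or> htsat (X, Y) \<psi>)"
| "htsat (X, Y) (Imp \<phi> \<psi>) =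
     ((\<not> htsat (X, Y) \<phi> \<or> htsat (X, Y) \<psi>) \<and> csat Y (Imp \<phi> \<psi>))"

definition htsat_th :: "'a set \<times> 'a set \<Rightarrow> 'a form set \<Rightarrow> bool" where
  "htsat_th M \<Gamma> = (\<forall>\<phi>\<in>\<Gamma>. htsat M \<phi>)"

definition csat_th :: "'a set \<Rightarrow> 'a form set \<Rightarrow> bool" where
  "csat_th Y \<Gamma> = (\<forall>\<phi>\<in>\<Gamma>. csat Y \<phi>)"

definition ht_interp :: "'a set \<Rightarrow> 'a set \<times> 'a set \<Rightarrow> bool" where
  "ht_interp L' M = (fst M \<subseteq> snd M \<and> snd M \<subseteq> L')"

definition here_countermodel :: "'a set \<times> 'a set \<Rightarrow> 'a form set \<Rightarrow> bool" where
  "here_countermodel M \<Gamma> = (\<not> htsat_th M \<Gamma> \<and> csat_th (snd M) \<Gamma>)"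

definition Es :: "'a set \<Rightarrow> 'a form set \<Rightarrow> ('a set \<times> 'a set) set" where
  "Es L' \<Gamma> = {M. ht_interp L' M \<and>
     ((fst M = snd M \<and> htsat_th M \<Gamma>) \<or> here_countermodel M \<Gamma>)}"

definition restrict :: "'a set \<times> 'a set \<Rightarrow> 'a set \<Rightarrow> 'a set \<times> 'a set" where
  "restrict M L = (fst M \<inter> L, snd M \<inter> L)"

definition totality_preserving :: "'a set \<times> 'a set \<Rightarrow> 'a set \<Rightarrow> bool" where
  "totality_preserving M L =
     (fst M \<subset> snd M \<longrightarrow> fst M \<inter> L \<subset> snd M \<inter> L)"

definition BigAnd :: "'a form set \<Rightarrow> 'a form" where
  "BigAnd S = foldr And (SOME xs. set xs = S \<and> distinct xs) Top"

definition BigOr :: "'a form set \<Rightarrow> 'a form" where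
  "BigOr S = foldr Or (SOME xs. set xs = S \<and> distinct xs) Bot"

definition Gamma_phi :: "'a set \<Rightarrow> 'a form set \<Rightarrow> 'a form \<Rightarrow> 'a form set" where
  "Gamma_phi L \<Gamma> \<phi> = {Neg (Neg \<psi>) | \<psi>. \<psi> \<in> \<Gamma>}
      \<union> {Imp \<phi> (Imp (Neg (Neg (Atom a))) (Atom a)) | a. a \<in> L}"

end

theory Submission
  imports Defs
begin

(* Write M = (X,Y).  Two elementary facts drive the proof:
   (1) M is in E_s(Gamma) iff Y is a classical model of Gamma and, if M
       HT-satisfies Gamma, then M is total (lemma Es_iff);
   (2) the restriction M|L HT-satisfies the conjunction of Gamma_phi iff Y
       classically satisfies Gamma and, if M satisfies phi, then M|L is total
       (lemma htsat_restrict_BigAnd_Gamma_phi): the double negations of Gamma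
       express classical truth at Y, and the stability axioms guarded by phi
       express that X and Y agree on L.  Since Gamma is nonempty, the
       disjunction over phi in Gamma therefore says: Y is a classical model of
       Gamma and M|L is total if M is an HT-model of Gamma
       (lemma htsat_restrict_BigOr_Gamma_phi).  The theorem then
   follows by a case distinction on whether X and Y agree on L: if they do,
   M satisfies every formula of Gamma in HT exactly when Y satisfies it
   classically. *)

lemma csat_restrict_atoms:
  "atoms \<phi> \<subseteq> L \<Longrightarrow> csat (Y \<inter> L) \<phi> = csat Y \<phi>"
  by (induction \<phi>) auto

lemma htsat_restrict_atoms:
  "atoms \<phi> \<subseteq> L \<Longrightarrow> htsat (X \<inter> L, Y \<inter> L) \<phi> = htsat (X, Y) \<phi>"
  by (induction \<phi>) (auto simp: csat_restrict_atoms)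

lemma htsat_persistent: "X \<subseteq> Y \<Longrightarrow> htsat (X, Y) \<phi> \<Longrightarrow> csat Y \<phi>"
  by (induction \<phi>) auto

lemma htsat_total: "htsat (Y, Y) \<phi> = csat Y \<phi>"
  by (induction \<phi>) auto

lemma htsat_agree_on_atoms:
  assumes "atoms \<phi> \<subseteq> L" and "X \<inter> L = Y \<inter> L"
  shows "htsat (X, Y) \<phi> = csat Y \<phi>"
  using htsat_restrict_atoms[OF assms(1), of X Y] htsat_restrict_atoms[OF assms(1), of Y Y]
    htsat_total[of Y \<phi>] assms(2) by simp

lemma htsat_NegNeg: "X \<subseteq> Y \<Longrightarrow> htsat (X, Y) (Neg (Neg \<psi>)) = csat Y \<psi>"
  using htsat_persistent[of X Y \<psi>] by (auto simp: Neg_def)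

lemma htsat_guarded_stability:
  "htsat (X, Y) (Imp \<phi> (Imp (Neg (Neg (Atom a))) (Atom a)))
     = (htsat (X, Y) \<phi> \<longrightarrow> a \<in> Y \<longrightarrow> a \<in> X)"
  by (auto simp: Neg_def)

lemma htsat_foldr_And: "htsat (X, Y) (foldr And xs Top) = (\<forall>x\<in>set xs. htsat (X, Y) x)"
  by (induction xs) (auto simp: Top_def)

lemma htsat_foldr_Or: "htsat (X, Y) (foldr Or xs Bot) = (\<exists>x\<in>set xs. htsat (X, Y) x)"
  by (induction xs) auto

lemma set_some_enumeration:
  "finite S \<Longrightarrow> set (SOME xs. set xs = S \<and> distinct xs) = S"
  by (metis (mono_tags, lifting) finite_distinct_list someI_ex)

lemma htsat_BigAnd: "finite S \<Longrightarrow> htsat (X, Y) (BigAnd S) = (\<forall>x\<in>S. htsat (X, Y) x)"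
  by (simp add: BigAnd_def htsat_foldr_And set_some_enumeration)

lemma htsat_BigOr: "finite S \<Longrightarrow> htsat (X, Y) (BigOr S) = (\<exists>x\<in>S. htsat (X, Y) x)"
  by (simp add: BigOr_def htsat_foldr_Or set_some_enumeration)

lemma Es_iff:
  assumes "ht_interp L' (X, Y)"
  shows "(X, Y) \<in> Es L' \<Gamma> \<longleftrightarrow> csat_th Y \<Gamma> \<and> (htsat_th (X, Y) \<Gamma> \<longrightarrow> X = Y)"
  using assms htsat_total[of Y]
  by (auto simp: Es_def here_countermodel_def htsat_th_def csat_th_def)

text \<open>Semantics of \<open>\<And>\<Gamma>\<^sub>\<phi>\<close> for an interpretation over L: the double negations give
  classical truth of \<open>\<Gamma>\<close> at Y, the guarded stability axioms give \<open>Y \<subseteq> X\<close> on L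
  whenever \<open>\<phi>\<close> holds.\<close>

lemma htsat_BigAnd_Gamma_phi:
  assumes "finite L" and "finite \<Gamma>" and "X \<subseteq> Y"
  shows "htsat (X, Y) (BigAnd (Gamma_phi L \<Gamma> \<phi>)) \<longleftrightarrow>
    (\<forall>\<psi>\<in>\<Gamma>. csat Y \<psi>) \<and> (htsat (X, Y) \<phi> \<longrightarrow> Y \<inter> L \<subseteq> X)"
proof -
  have "finite (Gamma_phi L \<Gamma> \<phi>)"
    using assms(1,2) by (simp add: Gamma_phi_def)
  then have "htsat (X, Y) (BigAnd (Gamma_phi L \<Gamma> \<phi>)) \<longleftrightarrow>
      (\<forall>\<chi>\<in>Gamma_phi L \<Gamma> \<phi>. htsat (X, Y) \<chi>)"
    by (rule htsat_BigAnd)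
  also have "\<dots> \<longleftrightarrow> (\<forall>\<psi>\<in>\<Gamma>. htsat (X, Y) (Neg (Neg \<psi>))) \<and>
      (\<forall>a\<in>L. htsat (X, Y) (Imp \<phi> (Imp (Neg (Neg (Atom a))) (Atom a))))"
    unfolding Gamma_phi_def by blast
  finally show ?thesis
    unfolding htsat_NegNeg[OF assms(3)] htsat_guarded_stability by blast
qed

lemma htsat_restrict_BigAnd_Gamma_phi:
  assumes "finite L" and "finite \<Gamma>" and "X \<subseteq> Y"
    and "\<forall>\<psi>\<in>\<Gamma>. atoms \<psi> \<subseteq> L" and "atoms \<phi> \<subseteq> L"
  shows "htsat (restrict (X, Y) L) (BigAnd (Gamma_phi L \<Gamma> \<phi>)) \<longleftrightarrow>
    csat_th Y \<Gamma> \<and> (htsat (X, Y) \<phi> \<longrightarrow> X \<inter> L = Y \<inter> L)"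
proof -
  have "X \<inter> L \<subseteq> Y \<inter> L" using assms(3) by blast
  then show ?thesis
    using assms(3-5)
    by (auto simp: restrict_def htsat_BigAnd_Gamma_phi[OF assms(1,2)] csat_th_def
        csat_restrict_atoms htsat_restrict_atoms)
qed

lemma htsat_restrict_BigOr_Gamma_phi:
  assumes "finite L" and "finite \<Gamma>" and "\<Gamma> \<noteq> {}"
    and "\<forall>\<psi>\<in>\<Gamma>. atoms \<psi> \<subseteq> L" and "X \<subseteq> Y"
  shows "htsat (restrict (X, Y) L) (BigOr ((\<lambda>\<phi>. BigAnd (Gamma_phi L \<Gamma> \<phi>)) ` \<Gamma>))
      \<longleftrightarrow> csat_th Y \<Gamma> \<and> (htsat_th (X, Y) \<Gamma> \<longrightarrow> X \<inter> L = Y \<inter> L)"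
proof -
  have "htsat (restrict (X, Y) L) (BigOr ((\<lambda>\<phi>. BigAnd (Gamma_phi L \<Gamma> \<phi>)) ` \<Gamma>))
      \<longleftrightarrow> (\<exists>\<phi>\<in>\<Gamma>. htsat (restrict (X, Y) L) (BigAnd (Gamma_phi L \<Gamma> \<phi>)))"
    using assms(2) by (simp add: restrict_def htsat_BigOr)
  also have "\<dots> \<longleftrightarrow> (\<exists>\<phi>\<in>\<Gamma>. csat_th Y \<Gamma> \<and> (htsat (X, Y) \<phi> \<longrightarrow> X \<inter> L = Y \<inter> L))"
    using htsat_restrict_BigAnd_Gamma_phi[OF assms(1,2,5,4)] assms(4) by simp
  also have "\<dots> \<longleftrightarrow> csat_th Y \<Gamma> \<and> (htsat_th (X, Y) \<Gamma> \<longrightarrow> X \<inter> L = Y \<inter> L)"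
    using assms(3) by (auto simp: htsat_th_def)
  finally show ?thesis .
qed

theorem mainTheorem8:
  fixes L L' :: "'a set" and \<Gamma> :: "'a form set" and M :: "'a set \<times> 'a set"
  assumes "finite L" and "finite \<Gamma>" and "\<Gamma> \<noteq> {}"
    and "\<forall>\<phi>\<in>\<Gamma>. atoms \<phi> \<subseteq> L"
    and "L \<subseteq> L'"
    and "ht_interp L' M"
  shows "M \<in> Es L' \<Gamma> \<longleftrightarrow>
    (totality_preserving M L \<and>
     htsat (restrict M L) (BigOr ((\<lambda>\<phi>. BigAnd (Gamma_phi L \<Gamma> \<phi>)) ` \<Gamma>)))"
proof -
  obtain X Y where M: "M = (X, Y)" by (cases M)
  have XY: "X \<subseteq> Y" using assms(6) by (simp add: M ht_interp_def)
  define agree where "agree \<longleftrightarrow> X \<inter> L = Y \<inter> L"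
  have disjunction: "htsat (restrict M L) (BigOr ((\<lambda>\<phi>. BigAnd (Gamma_phi L \<Gamma> \<phi>)) ` \<Gamma>))
      \<longleftrightarrow> csat_th Y \<Gamma> \<and> (htsat_th (X, Y) \<Gamma> \<longrightarrow> agree)"
    unfolding M agree_def by (rule htsat_restrict_BigOr_Gamma_phi[OF assms(1-4) XY])
  have agree_classical: "agree \<Longrightarrow> htsat_th (X, Y) \<Gamma> = csat_th Y \<Gamma>"
    using assms(4) htsat_agree_on_atoms[of _ L X Y]
    by (auto simp: agree_def htsat_th_def csat_th_def)
  have totality: "totality_preserving M L \<longleftrightarrow> (X = Y \<or> \<not> agree)"
    using XY by (auto simp: M agree_def totality_preserving_def)
  have "M \<in> Es L' \<Gamma> \<longleftrightarrow> csat_th Y \<Gamma> \<and> (htsat_th (X, Y) \<Gamma> \<longrightarrow> X = Y)"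
    using Es_iff assms(6) by (simp add: M)
  moreover have "X = Y \<Longrightarrow> agree" by (simp add: agree_def)
  ultimately show ?thesis
    unfolding disjunction totality using agree_classical by blast
qed

end
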